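(* Let $Z$ be a convex subset of a real vector space $V$, and let $p:V\to[0,\infty)$ be a seminorm such that $p(x)\leq a$ for all $x\in Z$, for some $a\geq 0$. Then for all $x,y\in Z$, $$p(x-y)\leq 2a\big(1-t_y(x)\big)\leq 2a\big(1-b(y)\big).$$
   Context: The weight function is $t_y(x)=\sup\{0\leq t<1 : \frac{y-tx}{1-t}\in Z\}$ for $x,y\in Z$, and the boundariness of $y\in Z$ is $b(y)=\inf_{x\in Z}t_y(x)$. *)

theory Defs
  imports "HOL-Analysis.Analysis"
begin

definition seminorm :: "('a::real_vector \<Rightarrow> real) \<Rightarrow> bool" where
  "seminorm p \<longleftrightarrow> (\<forall>x. 0 \<le> p x) \<and> (\<forall>x y. p (x + y) \<le> p x + p y)
     \<and> (\<forall>c x. p (c *\<^sub>R x) = \<bar>c\<bar> * p x)"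

definition weight :: "'a::real_vector set \<Rightarrow> 'a \<Rightarrow> 'a \<Rightarrow> real" where
  "weight Z y x = Sup {t. 0 \<le> t \<and> t < 1 \<and> (1 / (1 - t)) *\<^sub>R (y - t *\<^sub>R x) \<in> Z}"

definition boundariness :: "'a::real_vector set \<Rightarrow> 'a \<Rightarrow> real" where
  "boundariness Z y = Inf ((\<lambda>x. weight Z y x) ` Z)"

end

theory Submission
  imports Defs
begin

text \<open>If \<open>z = (y - t x)/(1 - t)\<close>, then \<open>x - y = (1 - t)(x - z)\<close>, so \<open>p (x - y) \<le> (1 - t)(p x + p z)\<close>;
  bounding \<open>p\<close> by \<open>a\<close> on \<open>Z\<close> and passing to the supremum over admissible \<open>t\<close> gives the first
  inequality. The second holds because \<open>b(y)\<close> is an infimum of weights, all of which are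
  nonnegative since \<open>t = 0\<close> is admissible.\<close>

lemma seminorm_diff_le:
  assumes "seminorm p"
  shows "p (u - v) \<le> p u + p v"
proof -
  have "p (u - v) \<le> p u + p ((-1) *\<^sub>R v)"
    using assms unfolding seminorm_def by (metis diff_conv_add_uminus scaleR_minus1_left)
  also have "p ((-1) *\<^sub>R v) = p v"
    using assms unfolding seminorm_def by (metis abs_minus_cancel abs_one mult_1)
  finally show ?thesis .
qed

lemma seminorm_diff_le_weight_parameter:
  assumes "seminorm p" and bound: "\<forall>z\<in>Z. p z \<le> a" and "x \<in> Z"
    and t: "0 \<le> t" "t < 1" and z: "(1 / (1 - t)) *\<^sub>R (y - t *\<^sub>R x) \<in> Z"
  shows "p (x - y) \<le> 2 * a * (1 - t)"
proof -
  define z where "z = (1 / (1 - t)) *\<^sub>R (y - t *\<^sub>R x)"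
  have "(1 - t) *\<^sub>R z = y - t *\<^sub>R x"
    using t unfolding z_def by simp
  then have "x - y = (1 - t) *\<^sub>R (x - z)"
    by (simp add: algebra_simps)
  then have "p (x - y) = (1 - t) * p (x - z)"
    using assms(1) t unfolding seminorm_def by simp
  also have "\<dots> \<le> (1 - t) * (p x + p z)"
    using seminorm_diff_le[OF assms(1)] t by (simp add: mult_left_mono)
  also have "\<dots> \<le> (1 - t) * (a + a)"
    using bound \<open>x \<in> Z\<close> z t unfolding z_def by (intro mult_left_mono add_mono) auto
  finally show ?thesis by (simp add: mult.commute)
qed

lemma le_scaled_one_minus_Sup:
  fixes S :: "real set"
  assumes "S \<noteq> {}" and "0 \<le> c" and le: "\<And>t. t \<in> S \<Longrightarrow> b \<le> c * (1 - t)"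
  shows "b \<le> c * (1 - Sup S)"
proof (cases "c = 0")
  case True
  then show ?thesis using le \<open>S \<noteq> {}\<close> by auto
next
  case False
  with \<open>0 \<le> c\<close> have "0 < c" by simp
  have "Sup S \<le> 1 - b / c"
    using le \<open>0 < c\<close> by (intro cSup_least[OF \<open>S \<noteq> {}\<close>]) (simp add: field_simps)
  then show ?thesis using \<open>0 < c\<close> by (simp add: field_simps)
qed

lemma zero_mem_weight_set:
  fixes Z :: "'a::real_vector set"
  assumes "y \<in> Z"
  shows "0 \<in> {t. 0 \<le> t \<and> t < 1 \<and> (1 / (1 - t)) *\<^sub>R (y - t *\<^sub>R x) \<in> Z}"
  using assms by auto

lemma weight_nonneg:
  assumes "y \<in> Z"
  shows "0 \<le> weight Z y x"
  unfolding weight_def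
  by (rule cSup_upper[OF zero_mem_weight_set[OF assms]]) (auto intro: bdd_aboveI[of _ 1])

lemma boundariness_le_weight:
  assumes "x \<in> Z" and "y \<in> Z"
  shows "boundariness Z y \<le> weight Z y x"
  unfolding boundariness_def
  using assms weight_nonneg[OF \<open>y \<in> Z\<close>] by (intro cInf_lower bdd_belowI[of _ 0]) auto

theorem proposition2:
  fixes Z :: "'a::real_vector set" and p :: "'a \<Rightarrow> real" and a :: real
  assumes "convex Z"
    and "seminorm p"
    and "0 \<le> a"
    and "\<forall>x\<in>Z. p x \<le> a"
    and "x \<in> Z" and "y \<in> Z"
  shows "p (x - y) \<le> 2 * a * (1 - weight Z y x)
       \<and> 2 * a * (1 - weight Z y x) \<le> 2 * a * (1 - boundariness Z y)"
proof
  show "p (x - y) \<le> 2 * a * (1 - weight Z y x)"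
    unfolding weight_def
  proof (rule le_scaled_one_minus_Sup)
    show "{t. 0 \<le> t \<and> t < 1 \<and> (1 / (1 - t)) *\<^sub>R (y - t *\<^sub>R x) \<in> Z} \<noteq> {}"
      using zero_mem_weight_set[OF \<open>y \<in> Z\<close>] by blast
  qed (use \<open>0 \<le> a\<close> seminorm_diff_le_weight_parameter[OF assms(2,4,5)] in auto)
  show "2 * a * (1 - weight Z y x) \<le> 2 * a * (1 - boundariness Z y)"
    using boundariness_le_weight[OF \<open>x \<in> Z\<close> \<open>y \<in> Z\<close>] \<open>0 \<le> a\<close> by (simp add: mult_left_mono)
qed

end
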